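(* The string rewriting system $T=D_T\cup A\cup B$ is terminating if and only if the Collatz conjecture holds, i.e. if and only if for every $n\in\mathbb{N}^+$ there is $k\in\mathbb{N}$ with $C^k(n)=1$ (equivalently, every trajectory of the map $\tau(n)=n/2$ for even $n$, $\tau(n)=(3n+1)/2$ for odd $n$, on $\mathbb{N}^+$ contains $1$).
   Context: $C:\mathbb{N}^+\to\mathbb{N}^+$ is the Collatz function $C(n)=n/2$ for $n$ even, $C(n)=3n+1$ for $n$ odd; $C^k$ is the $k$-fold iterate. A string rewriting system $R$ induces $u\ell v\to_R urv$ for each rule $\ell\to r$; it is terminating if there is no infinite rewrite sequence. Alphabet $\{0_2,1_2,0_3,1_3,2_3,\lhd,\rhd\}$. $D_T=\{0_2\rhd\to\rhd,\ 1_2\rhd\to 2_3\rhd\}$; $A=\{0_20_3\to0_30_2,\ 0_21_3\to0_31_2,\ 0_22_3\to1_30_2,\ 1_20_3\to1_31_2,\ 1_21_3\to2_30_2,\ 1_22_3\to2_31_2\}$; $B=\{\lhd0_3\to\lhd1_2,\ \lhd1_3\to\lhd0_20_2,\ \lhd2_3\to\lhd0_21_2\}$. (Intended reading: a string $\lhd d_1\cdots d_k\rhd$ represents the value obtained from $1$ by applying successively $d_1,\dots,d_k$, where $a_b$ acts as $x\mapsto bx+a$.) *)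

theory Defs
  imports Main
begin

text \<open>The alphabet {0_2, 1_2, 0_3, 1_3, 2_3, lhd, rhd}.\<close>
datatype sym = Z2 | O2 | Z3 | O3 | T3 | LB | RB

definition collatz :: "nat \<Rightarrow> nat" where
  "collatz n = (if even n then n div 2 else 3 * n + 1)"

type_synonym srs = "(sym list \<times> sym list) set"

definition rewrite_step :: "srs \<Rightarrow> sym list \<Rightarrow> sym list \<Rightarrow> bool" where
  "rewrite_step R s t \<longleftrightarrow>
     (\<exists>u v l r. (l, r) \<in> R \<and> s = u @ l @ v \<and> t = u @ r @ v)"

definition terminating :: "srs \<Rightarrow> bool" where
  "terminating R \<longleftrightarrow> \<not> (\<exists>f :: nat \<Rightarrow> sym list. \<forall>i. rewrite_step R (f i) (f (Suc i)))"

definition D_T :: srs where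
  "D_T = {([Z2, RB], [RB]), ([O2, RB], [T3, RB])}"

definition A_rules :: srs where
  "A_rules = {([Z2, Z3], [Z3, Z2]), ([Z2, O3], [Z3, O2]), ([Z2, T3], [O3, Z2]),
              ([O2, Z3], [O3, O2]), ([O2, O3], [T3, Z2]), ([O2, T3], [T3, O2])}"

definition B_rules :: srs where
  "B_rules = {([LB, Z3], [LB, O2]), ([LB, O3], [LB, Z2, Z2]), ([LB, T3], [LB, Z2, O2])}"

definition T_sys :: srs where
  "T_sys = D_T \<union> A_rules \<union> B_rules"

end

theory Submission
  imports Defs
begin

text \<open>Read \<lhd>w\<rhd> as the number obtained from 1 by the digits of w. The A-rules move a ternary
  digit left past a binary one without changing this value, the B-rules turn a ternary digit right
  after \<lhd> into binary digits, and the D_T-rules act at \<rhd> as Collatz steps: 0_2\<rhd> \<rightarrow> \<rhd>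
  halves the value, and 1_2\<rhd> \<rightarrow> 2_3\<rhd> sends 2x+1 to 3x+2 = C(C(2x+1)). So a word \<lhd>w\<rhd> with w
  binary rewrites to another such word whose value lies further along the Collatz trajectory, and
  starting from the binary expansion of a divergent n this never stops.

  Conversely, if every trajectory reaches 1, each rewrite step decreases the pair (P, W)
  lexicographically. P scans the word from the left, adding the stopping time of the current value
  at every \<rhd> closing a bracket and 1 for every binary digit outside brackets; the D_T-rules
  decrease P, the A- and B-rules keep it. W counts the pairs (binary digit, later ternary digit)
  plus the square of the number of ternary digits; the A- and B-rules decrease W.\<close>

lemma terminating_iff_wfp: "terminating R \<longleftrightarrow> wfp (rewrite_step R)\<inverse>\<inverse>"
  unfolding terminating_def wf_iff_no_infinite_down_chain[to_pred] by simp

lemma rewrite_step_append_context: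
  "rewrite_step R s t \<Longrightarrow> rewrite_step R (u @ s @ v) (u @ t @ v)"
  unfolding rewrite_step_def by (metis append.assoc)

lemma rewrite_steps_append_context:
  "(rewrite_step R)\<^sup>*\<^sup>* s t \<Longrightarrow> (rewrite_step R)\<^sup>*\<^sup>* (u @ s @ v) (u @ t @ v)"
  by (induction rule: rtranclp_induct)
    (auto intro: rtranclp.rtrancl_into_rtrancl rewrite_step_append_context)

lemma rewrite_step_rule_context: "(l, r) \<in> R \<Longrightarrow> rewrite_step R (u @ l @ v) (u @ r @ v)"
  unfolding rewrite_step_def by blast

lemma not_wfp_conversep_if_tranclp_successor:
  assumes "x \<in> S" and "\<And>y. y \<in> S \<Longrightarrow> \<exists>z \<in> S. r\<^sup>+\<^sup>+ y z"
  shows "\<not> wfp r\<inverse>\<inverse>"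
proof
  assume "wfp r\<inverse>\<inverse>"
  then have "wfp (r\<^sup>+\<^sup>+)\<inverse>\<inverse>"
    using wfp_tranclp tranclp_converse by metis
  then obtain y where "y \<in> S" and "\<forall>z. r\<^sup>+\<^sup>+ y z \<longrightarrow> z \<notin> S"
    using assms(1) unfolding wfp_eq_minimal by (metis conversepI)
  with assms(2) show False by blast
qed

fun digit :: "sym \<Rightarrow> nat \<Rightarrow> nat" where
  "digit Z2 x = 2 * x"
| "digit O2 x = 2 * x + 1"
| "digit Z3 x = 3 * x"
| "digit O3 x = 3 * x + 1"
| "digit T3 x = 3 * x + 2"
| "digit LB x = x"
| "digit RB x = x"

definition word_val :: "nat \<Rightarrow> sym list \<Rightarrow> nat" where
  "word_val x w = foldl (\<lambda>y d. digit d y) x w"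

lemma word_val_simps [simp]:
  "word_val x [] = x"
  "word_val x (d # w) = word_val (digit d x) w"
  "word_val x (u @ w) = word_val (word_val x u) w"
  by (simp_all add: word_val_def)

definition binary :: "sym set" where
  "binary = {Z2, O2}"

definition ternary :: "sym set" where
  "ternary = {Z3, O3, T3}"

lemma collatz_double: "collatz (2 * x) = x"
  by (simp add: collatz_def)

lemma collatz_odd: "collatz (2 * x + 1) = 2 * (3 * x + 2)"
  by (simp add: collatz_def)

definition reaches_one :: "nat \<Rightarrow> bool" where
  "reaches_one n \<longleftrightarrow> (\<exists>k. (collatz ^^ k) n = 1)"

definition stopping_time :: "nat \<Rightarrow> nat" where
  "stopping_time n = (LEAST k. (collatz ^^ k) n = 1)"

lemma stopping_time_collatz_less:
  assumes "reaches_one n" and "n \<noteq> 1"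
  shows "stopping_time (collatz n) < stopping_time n"
proof -
  have at_n: "(collatz ^^ stopping_time n) n = 1"
    using assms(1) unfolding reaches_one_def stopping_time_def by (rule LeastI_ex)
  then obtain j where j: "stopping_time n = Suc j"
    using assms(2) by (cases "stopping_time n") auto
  then have "(collatz ^^ j) (collatz n) = 1"
    using at_n by (simp add: funpow_Suc_right del: funpow.simps)
  then have "stopping_time (collatz n) \<le> j"
    unfolding stopping_time_def by (rule Least_le)
  with j show ?thesis by simp
qed

lemma reaches_one_collatz:
  assumes "reaches_one n" and "n \<noteq> 1"
  shows "reaches_one (collatz n)"
  using assms unfolding reaches_one_def
  by (metis funpow_0 funpow_Suc_right comp_apply not0_implies_Suc)

lemma stopping_time_double_less:
  "reaches_one (2 * x) \<Longrightarrow> stopping_time x < stopping_time (2 * x)"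
  using stopping_time_collatz_less[of "2 * x"] unfolding collatz_double by simp

lemma stopping_time_odd_less:
  assumes "reaches_one (2 * x + 1)" and "x > 0"
  shows "stopping_time (3 * x + 2) < stopping_time (2 * x + 1)"
proof -
  have "reaches_one (2 * (3 * x + 2))"
    using reaches_one_collatz[OF assms(1)] assms(2) unfolding collatz_odd by simp
  then have "stopping_time (3 * x + 2) < stopping_time (2 * (3 * x + 2))"
    by (rule stopping_time_double_less)
  also have "\<dots> < stopping_time (2 * x + 1)"
    using stopping_time_collatz_less[OF assms(1)] assms(2) unfolding collatz_odd by simp
  finally show ?thesis .
qed

lemma not_reaches_one_funpow:
  "\<not> reaches_one n \<Longrightarrow> \<not> reaches_one ((collatz ^^ k) n)"
  unfolding reaches_one_def by (metis comp_apply funpow_add)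

fun scan_step :: "nat option \<Rightarrow> sym \<Rightarrow> nat option" where
  "scan_step _ LB = Some 1"
| "scan_step _ RB = None"
| "scan_step (Some x) d = Some (digit d x)"
| "scan_step None _ = None"

fun cost :: "nat option \<Rightarrow> sym \<Rightarrow> nat" where
  "cost (Some x) RB = stopping_time x"
| "cost None d = (if d \<in> binary then 1 else 0)"
| "cost (Some _) _ = 0"

fun potential :: "nat option \<Rightarrow> sym list \<Rightarrow> nat" where
  "potential _ [] = 0"
| "potential st (d # w) = cost st d + potential (scan_step st d) w"

lemma potential_append:
  "potential st (u @ w) = potential st u + potential (foldl scan_step st u) w"
  by (induction u arbitrary: st) auto

lemma foldl_scan_step_neq_Some_0:
  "st \<noteq> Some 0 \<Longrightarrow> foldl scan_step st u \<noteq> Some 0"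
proof (induction u arbitrary: st)
  case (Cons d u)
  then show ?case by (cases st; cases d) auto
qed simp

lemma foldl_scan_step_T_sys_eq:
  "(l, r) \<in> T_sys \<Longrightarrow> foldl scan_step st l = foldl scan_step st r"
  by (cases st) (auto simp: T_sys_def D_T_def A_rules_def B_rules_def)

lemma potential_A_B_rules_eq:
  "(l, r) \<in> A_rules \<union> B_rules \<Longrightarrow> potential st r = potential st l"
  by (cases st) (auto simp: A_rules_def B_rules_def binary_def)

text \<open>The hypothesis on st excludes the value 0, which never reaches 1 and whose stopping time
  is therefore a junk value.\<close>

lemma potential_D_T_less:
  assumes "\<And>n. n > 0 \<Longrightarrow> reaches_one n" and "(l, r) \<in> D_T" and "st \<noteq> Some 0"
  shows "potential st r < potential st l"
proof (cases st)
  case (Some x)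
  with assms(3) have "x > 0" by simp
  then show ?thesis
    using assms(1)[of "2 * x"] assms(1)[of "2 * x + 1"] assms(2) Some
      stopping_time_double_less stopping_time_odd_less
    by (auto simp: D_T_def)
qed (use assms(2) in \<open>auto simp: D_T_def binary_def\<close>)

definition binary_count :: "sym list \<Rightarrow> nat" where
  "binary_count w = length (filter (\<lambda>d. d \<in> binary) w)"

definition ternary_count :: "sym list \<Rightarrow> nat" where
  "ternary_count w = length (filter (\<lambda>d. d \<in> ternary) w)"

lemma binary_count_append [simp]: "binary_count (u @ w) = binary_count u + binary_count w"
  by (simp add: binary_count_def)

lemma ternary_count_append [simp]: "ternary_count (u @ w) = ternary_count u + ternary_count w"
  by (simp add: ternary_count_def)

fun inversions :: "sym list \<Rightarrow> nat" where
  "inversions [] = 0"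
| "inversions (d # w) = (if d \<in> binary then ternary_count w else 0) + inversions w"

lemma inversions_append:
  "inversions (u @ w) = inversions u + binary_count u * ternary_count w + inversions w"
  by (induction u) (auto simp: binary_count_def algebra_simps)

definition weight :: "sym list \<Rightarrow> nat" where
  "weight w = inversions w + (ternary_count w)\<^sup>2"

lemma weight_append3:
  "weight (u @ l @ v) = inversions u + binary_count u * (ternary_count l + ternary_count v)
     + inversions l + binary_count l * ternary_count v + inversions v
     + (ternary_count u + ternary_count l + ternary_count v)\<^sup>2"
  by (simp add: weight_def inversions_append algebra_simps)

text \<open>An A-rule removes one inversion. A B-rule removes a ternary digit, which lowers the square by
  at least 2c + 1 for the c ternary digits to its right, and adds at most two binary digits, which
  create at most 2c inversions.\<close>

lemma weight_A_B_rules_less: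
  assumes "(l, r) \<in> A_rules \<union> B_rules"
  shows "weight (u @ r @ v) < weight (u @ l @ v)"
  using assms unfolding weight_append3
  by (auto simp: A_rules_def B_rules_def binary_count_def ternary_count_def binary_def ternary_def
      power2_eq_square algebra_simps)

lemma rewrite_step_T_sys_lex_less:
  assumes collatz: "\<And>n. n > 0 \<Longrightarrow> reaches_one n" and "rewrite_step T_sys s t"
  shows "((potential None t, weight t), (potential None s, weight s)) \<in> less_than <*lex*> less_than"
proof -
  obtain u v l r where lr: "(l, r) \<in> T_sys" and s: "s = u @ l @ v" and t: "t = u @ r @ v"
    using assms(2) unfolding rewrite_step_def by blast
  define st where "st = foldl scan_step None u"
  have st: "st \<noteq> Some 0"
    unfolding st_def by (rule foldl_scan_step_neq_Some_0) simp
  define st' where "st' = foldl scan_step st l"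
  have potential_s: "potential None s = potential None u + potential st l + potential st' v"
    by (simp add: s st_def st'_def potential_append)
  have potential_t: "potential None t = potential None u + potential st r + potential st' v"
    by (simp add: t st_def st'_def potential_append foldl_scan_step_T_sys_eq[OF lr])
  consider "(l, r) \<in> D_T" | "(l, r) \<in> A_rules \<union> B_rules"
    using lr unfolding T_sys_def by blast
  then show ?thesis
  proof cases
    case 1
    then have "potential st r < potential st l"
      using potential_D_T_less[OF collatz _ st] by blast
    then show ?thesis using potential_s potential_t by simp
  next
    case 2
    then show ?thesis
      using potential_s potential_t potential_A_B_rules_eq[of l r st]
        weight_A_B_rules_less[of l r u v] s t
      by simp
  qed
qed

lemma collatz_imp_terminating:
  assumes "\<And>n. n > 0 \<Longrightarrow> reaches_one n"
  shows "terminating T_sys"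
  unfolding terminating_iff_wfp
proof (rule wfp_if_convertible_to_wfp)
  show "wfp (\<lambda>p q. (p, q) \<in> less_than <*lex*> less_than)"
    by (simp add: wfp_on_wf_on_eq wf_lex_prod)
  show "((potential None s, weight s), (potential None t, weight t)) \<in> less_than <*lex*> less_than"
    if "(rewrite_step T_sys)\<inverse>\<inverse> s t" for s t
    using rewrite_step_T_sys_lex_less[OF assms] that by simp
qed

lemma A_rules_swap:
  assumes "b \<in> binary" and "t \<in> ternary"
  obtains t' b' where "([b, t], [t', b']) \<in> A_rules" and "t' \<in> ternary" and "b' \<in> binary"
    and "\<And>x. digit t (digit b x) = digit b' (digit t' x)"
proof -
  from assms consider "b = Z2 \<and> t = Z3" | "b = Z2 \<and> t = O3" | "b = Z2 \<and> t = T3"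
    | "b = O2 \<and> t = Z3" | "b = O2 \<and> t = O3" | "b = O2 \<and> t = T3"
    by (auto simp: binary_def ternary_def)
  then show ?thesis
    by cases (force intro: that simp: A_rules_def binary_def ternary_def)+
qed

lemma B_rules_expand:
  assumes "t \<in> ternary"
  obtains bs where "([LB, t], LB # bs) \<in> B_rules" and "set bs \<subseteq> binary"
    and "word_val 1 bs = digit t 1"
proof -
  from assms consider "t = Z3" | "t = O3" | "t = T3"
    by (auto simp: ternary_def)
  then show ?thesis
    by cases (force intro: that simp: B_rules_def binary_def)+
qed

lemma ternary_digit_moves_left:
  assumes "set bs \<subseteq> binary" and "t \<in> ternary"
  shows "\<exists>t' bs'. t' \<in> ternary \<and> set bs' \<subseteq> binary
    \<and> (\<forall>x. word_val x (t' # bs') = word_val x (bs @ [t]))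
    \<and> (rewrite_step T_sys)\<^sup>*\<^sup>* (bs @ [t]) (t' # bs')"
  using assms
proof (induction bs)
  case Nil
  then show ?case by (intro exI[of _ t] exI[of _ "[]"]) simp
next
  case (Cons b cs)
  then obtain t'' cs' where t'': "t'' \<in> ternary" and cs': "set cs' \<subseteq> binary"
    and val: "\<forall>x. word_val x (t'' # cs') = word_val x (cs @ [t])"
    and steps: "(rewrite_step T_sys)\<^sup>*\<^sup>* (cs @ [t]) (t'' # cs')"
    by auto
  obtain t' b' where rule: "([b, t''], [t', b']) \<in> A_rules" and t': "t' \<in> ternary"
    and b': "b' \<in> binary" and swap: "\<And>x. digit t'' (digit b x) = digit b' (digit t' x)"
    using A_rules_swap[of b t''] Cons.prems t'' by auto
  have "(rewrite_step T_sys)\<^sup>*\<^sup>* (b # cs @ [t]) ([b, t''] @ cs')"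
    using rewrite_steps_append_context[OF steps, of "[b]" "[]"] by simp
  also have "rewrite_step T_sys ([b, t''] @ cs') ([t', b'] @ cs')"
    using rewrite_step_rule_context[of "[b, t'']" "[t', b']" T_sys "[]" cs'] rule
    by (simp add: T_sys_def)
  finally have "(rewrite_step T_sys)\<^sup>*\<^sup>* ((b # cs) @ [t]) (t' # b' # cs')"
    by simp
  moreover have "word_val x (t' # b' # cs') = word_val x ((b # cs) @ [t])" for x
    using val swap[of x, symmetric] by simp
  ultimately show ?case
    using t' b' cs' by (intro exI[of _ t'] exI[of _ "b' # cs'"]) auto
qed

lemma bracketed_word_collatz_steps:
  assumes bin: "set w \<subseteq> binary" and not_one: "word_val 1 w \<noteq> 1"
  obtains w' k where "set w' \<subseteq> binary"
    and "(rewrite_step T_sys)\<^sup>+\<^sup>+ (LB # w @ [RB]) (LB # w' @ [RB])"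
    and "word_val 1 w' = (collatz ^^ k) (word_val 1 w)"
proof -
  obtain bs d where w: "w = bs @ [d]"
    using not_one by (cases w rule: rev_cases) auto
  with bin have bs: "set bs \<subseteq> binary" and "d \<in> binary" by auto
  then consider "d = Z2" | "d = O2" by (auto simp: binary_def)
  then show ?thesis
  proof cases
    case 1
    have "rewrite_step T_sys (LB # bs @ [Z2, RB]) (LB # bs @ [RB])"
      using rewrite_step_rule_context[of "[Z2, RB]" "[RB]" T_sys "LB # bs" "[]"]
      by (simp add: T_sys_def D_T_def)
    moreover have "word_val 1 bs = (collatz ^^ 1) (word_val 1 w)"
      using w 1 by (simp add: collatz_double)
    ultimately show ?thesis
      using that[of bs 1] bs w 1 by auto
  next
    case 2
    obtain t' bs' where t': "t' \<in> ternary" and bs': "set bs' \<subseteq> binary"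
      and val: "\<forall>x. word_val x (t' # bs') = word_val x (bs @ [T3])"
      and moved: "(rewrite_step T_sys)\<^sup>*\<^sup>* (bs @ [T3]) (t' # bs')"
      using ternary_digit_moves_left[OF bs, of T3] by (auto simp: ternary_def)
    obtain bb where rule: "([LB, t'], LB # bb) \<in> B_rules" and bb: "set bb \<subseteq> binary"
      and val_bb: "word_val 1 bb = digit t' 1"
      using B_rules_expand[OF t'] by blast
    have halve: "rewrite_step T_sys (LB # w @ [RB]) (LB # bs @ [T3, RB])"
      using rewrite_step_rule_context[of "[O2, RB]" "[T3, RB]" T_sys "LB # bs" "[]"] w 2
      by (simp add: T_sys_def D_T_def)
    have move: "(rewrite_step T_sys)\<^sup>*\<^sup>* (LB # bs @ [T3, RB]) (LB # t' # bs' @ [RB])"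
      using rewrite_steps_append_context[OF moved, of "[LB]" "[RB]"] by simp
    have expand: "rewrite_step T_sys (LB # t' # bs' @ [RB]) (LB # (bb @ bs') @ [RB])"
      using rewrite_step_rule_context[of "[LB, t']" "LB # bb" T_sys "[]" "bs' @ [RB]"] rule
      by (simp add: T_sys_def)
    have steps: "(rewrite_step T_sys)\<^sup>+\<^sup>+ (LB # w @ [RB]) (LB # (bb @ bs') @ [RB])"
      using rtranclp_into_tranclp1[OF converse_rtranclp_into_rtranclp[OF halve move] expand] .
    define y where "y = word_val 1 bs"
    have "word_val 1 (bb @ bs') = 3 * y + 2"
      using val val_bb by (simp add: y_def)
    also have "\<dots> = collatz (collatz (2 * y + 1))"
      by (simp only: collatz_odd collatz_double)
    also have "\<dots> = (collatz ^^ 2) (word_val 1 w)"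
      using w 2 by (simp add: y_def numeral_2_eq_2)
    finally show ?thesis
      using that[of "bb @ bs'" 2] bb bs' steps by auto
  qed
qed

lemma binary_word_exists:
  "n > 0 \<Longrightarrow> \<exists>w. set w \<subseteq> binary \<and> word_val 1 w = n"
proof (induction n rule: less_induct)
  case (less n)
  show ?case
  proof (cases "n = 1")
    case True
    then show ?thesis by (intro exI[of _ "[]"]) simp
  next
    case False
    with less.prems obtain w where "set w \<subseteq> binary" and "word_val 1 w = n div 2"
      using less.IH[of "n div 2"] by auto
    then show ?thesis
      by (intro exI[of _ "w @ [if even n then Z2 else O2]"]) (auto simp: binary_def)
  qed
qed

lemma terminating_imp_reaches_one:
  assumes "terminating T_sys" and "n > 0"
  shows "reaches_one n"
proof (rule ccontr)
  assume diverges: "\<not> reaches_one n"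
  define S where "S = {LB # w @ [RB] | w. set w \<subseteq> binary \<and> \<not> reaches_one (word_val 1 w)}"
  obtain w0 where "set w0 \<subseteq> binary" and "word_val 1 w0 = n"
    using binary_word_exists[OF assms(2)] by blast
  with diverges have "LB # w0 @ [RB] \<in> S"
    unfolding S_def by blast
  moreover have "\<exists>z \<in> S. (rewrite_step T_sys)\<^sup>+\<^sup>+ y z" if "y \<in> S" for y
  proof -
    from that obtain w where y: "y = LB # w @ [RB]" and w: "set w \<subseteq> binary"
      and w_diverges: "\<not> reaches_one (word_val 1 w)"
      unfolding S_def by blast
    have "word_val 1 w \<noteq> 1"
      using w_diverges unfolding reaches_one_def by (metis funpow_0)
    then obtain w' k where "set w' \<subseteq> binary"
      and "(rewrite_step T_sys)\<^sup>+\<^sup>+ y (LB # w' @ [RB])"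
      and "word_val 1 w' = (collatz ^^ k) (word_val 1 w)"
      using bracketed_word_collatz_steps[OF w] y by metis
    with w_diverges show ?thesis
      unfolding S_def using not_reaches_one_funpow by fastforce
  qed
  ultimately have "\<not> wfp (rewrite_step T_sys)\<inverse>\<inverse>"
    by (rule not_wfp_conversep_if_tranclp_successor)
  with assms(1) show False
    unfolding terminating_iff_wfp by blast
qed

theorem mainTheorem6:
  shows "terminating T_sys \<longleftrightarrow> (\<forall>n::nat. n > 0 \<longrightarrow> (\<exists>k. (collatz ^^ k) n = 1))"
  using terminating_imp_reaches_one collatz_imp_terminating
  unfolding reaches_one_def by blast

end
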